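(* In the standing setup, let $T$ be a valid partial table and let $(i,b)$ be a position with $T(i,b)=\emptyset$. Then either there exists $x\in B_{i,b}$ such that both $S_i+x$ and $C_b+x$ are independent, or there are at least $n-|C_b|$ columns $c$ that are $(i,b)$-swappable.
   Context: Standing setup: $M$ is a matroid of rank $n$ on ground set $E$; $f\le n$ is a positive integer; for each $i\in\{1,\dots,f\}$ and $j\in\{1,\dots,n\}$, $B_{i,j}$ is a basis of $M$, and the sets $B_{i,j}$ are pairwise disjoint. A valid partial table $T$ assigns to each position $(i,j)\in[f]\times[n]$ either the symbol $\emptyset$ (the position is empty) or an element $T(i,j)\in B_{i,j}$, such that for every row $i$ the set $S_i=\{T(i,j):T(i,j)\ne\emptyset\}$ is independent and for every column $j$ the set $C_j=\{T(i,j):T(i,j)\neq\emptyset\}$ is independent. Notation: for a set $A$ and an element $z$, "$A+z$ is independent" means $z\notin A$ and $A\cup\{z\}$ is independent; $A-z$ denotes $A\setminus\{z\}$ for $z\in A$; expressions such as $A-z+w$ are read left to right with the same convention. Definition: given $T(i,b)=\emptyset$, a column $c$ with $T(i,c)=x'\neq\emptyset$ is $(i,b)$-swappable if there is $y\in B_{i,b}$ such that $C_b+y$ and $S_i-x'+y$ are independent; such $y$ is called a witness for the $(i,b)$-swappability of $c$. *)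

theory Defs
  imports Main
begin

definition matroid :: "'a set \<Rightarrow> ('a set \<Rightarrow> bool) \<Rightarrow> bool" where
  "matroid E indep \<longleftrightarrow>
     finite E \<and> indep {} \<and>
     (\<forall>X. indep X \<longrightarrow> X \<subseteq> E) \<and>
     (\<forall>X Y. indep X \<and> Y \<subseteq> X \<longrightarrow> indep Y) \<and>
     (\<forall>X Y. indep X \<and> indep Y \<and> card X < card Y \<longrightarrow>
        (\<exists>y \<in> Y - X. indep (insert y X)))"

definition basis :: "'a set \<Rightarrow> ('a set \<Rightarrow> bool) \<Rightarrow> 'a set \<Rightarrow> bool" where
  "basis E indep B \<longleftrightarrow> B \<subseteq> E \<and> indep B \<and> (\<forall>x \<in> E - B. \<not> indep (insert x B))"

definition matroid_rank :: "'a set \<Rightarrow> ('a set \<Rightarrow> bool) \<Rightarrow> nat" where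
  "matroid_rank E indep = Max (card ` {X. X \<subseteq> E \<and> indep X})"

text \<open>A partial table: positions (i,j) with i in 1..f, j in 1..n; None = empty position.\<close>
definition row_set :: "nat \<Rightarrow> (nat \<Rightarrow> nat \<Rightarrow> 'a option) \<Rightarrow> nat \<Rightarrow> 'a set" where
  "row_set n T i = {x. \<exists>j \<in> {1..n}. T i j = Some x}"

definition col_set :: "nat \<Rightarrow> (nat \<Rightarrow> nat \<Rightarrow> 'a option) \<Rightarrow> nat \<Rightarrow> 'a set" where
  "col_set f T j = {x. \<exists>i \<in> {1..f}. T i j = Some x}"

definition valid_partial_table ::
  "('a set \<Rightarrow> bool) \<Rightarrow> nat \<Rightarrow> nat \<Rightarrow> (nat \<Rightarrow> nat \<Rightarrow> 'a set) \<Rightarrow> (nat \<Rightarrow> nat \<Rightarrow> 'a option) \<Rightarrow> bool" where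
  "valid_partial_table indep f n B T \<longleftrightarrow>
     (\<forall>i \<in> {1..f}. \<forall>j \<in> {1..n}. \<forall>x. T i j = Some x \<longrightarrow> x \<in> B i j) \<and>
     (\<forall>i \<in> {1..f}. indep (row_set n T i)) \<and>
     (\<forall>j \<in> {1..n}. indep (col_set f T j))"

definition plus_indep :: "('a set \<Rightarrow> bool) \<Rightarrow> 'a set \<Rightarrow> 'a \<Rightarrow> bool" where
  "plus_indep indep A z \<longleftrightarrow> z \<notin> A \<and> indep (insert z A)"

text \<open>Column c is (i,b)-swappable (assuming T(i,b) is empty).\<close>
definition swap_witness ::
  "('a set \<Rightarrow> bool) \<Rightarrow> nat \<Rightarrow> nat \<Rightarrow> (nat \<Rightarrow> nat \<Rightarrow> 'a set) \<Rightarrow> (nat \<Rightarrow> nat \<Rightarrow> 'a option)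
    \<Rightarrow> nat \<Rightarrow> nat \<Rightarrow> nat \<Rightarrow> 'a \<Rightarrow> bool" where
  "swap_witness indep f n B T i b c y \<longleftrightarrow>
     (\<exists>x'. T i c = Some x' \<and> y \<in> B i b \<and>
        plus_indep indep (col_set f T b) y \<and>
        plus_indep indep (row_set n T i - {x'}) y)"

definition swappable ::
  "('a set \<Rightarrow> bool) \<Rightarrow> nat \<Rightarrow> nat \<Rightarrow> (nat \<Rightarrow> nat \<Rightarrow> 'a set) \<Rightarrow> (nat \<Rightarrow> nat \<Rightarrow> 'a option)
    \<Rightarrow> nat \<Rightarrow> nat \<Rightarrow> nat \<Rightarrow> bool" where
  "swappable indep f n B T i b c \<longleftrightarrow>
     c \<in> {1..n} \<and> T i c \<noteq> None \<and> (\<exists>y. swap_witness indep f n B T i b c y)"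

end

theory Submission
  imports Defs
begin

text \<open>Extend the column set \<open>C\<^sub>b\<close> by elements \<open>Y\<close> of the basis \<open>B\<^sub>i\<^sub>,\<^sub>b\<close>, so that
  \<open>C\<^sub>b \<union> Y\<close> is independent and \<open>|Y| \<ge> n - |C\<^sub>b|\<close>. If no \<open>y \<in> Y\<close> extends the row set
  \<open>S\<^sub>i\<close>, each \<open>S\<^sub>i + y\<close> is dependent, and an augmentation argument shows that at least
  \<open>|Y|\<close> elements \<open>x \<in> S\<^sub>i\<close> admit some \<open>y \<in> Y\<close> with \<open>S\<^sub>i - x + y\<close> independent;
  the columns of these \<open>x\<close> are \<open>(i,b)\<close>-swappable.\<close>

lemma matroid_indep_finite: "matroid E indep \<Longrightarrow> indep X \<Longrightarrow> finite X"
  unfolding matroid_def by (meson finite_subset)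

lemma matroid_indep_subset: "matroid E indep \<Longrightarrow> indep X \<Longrightarrow> Y \<subseteq> X \<Longrightarrow> indep Y"
  unfolding matroid_def by blast

lemma matroid_augment:
  "matroid E indep \<Longrightarrow> indep X \<Longrightarrow> indep Y \<Longrightarrow> card X < card Y
    \<Longrightarrow> \<exists>y \<in> Y - X. indep (insert y X)"
  unfolding matroid_def by blast

lemma matroid_extend_from:
  assumes m: "matroid E indep" and K: "indep K" and J: "indep J"
  shows "\<exists>I. J \<subseteq> I \<and> I \<subseteq> J \<union> K \<and> indep I \<and> card K \<le> card I"
  using J
proof (induction "card K - card J" arbitrary: J rule: less_induct)
  case (less J)
  show ?case
  proof (cases "card K \<le> card J")
    case True
    then show ?thesis using less.prems by blast
  next
    case False
    then obtain y where y: "y \<in> K - J" "indep (insert y J)"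
      using matroid_augment[OF m less.prems K] by auto
    have "card (insert y J) = card J + 1"
      using y matroid_indep_finite[OF m less.prems] by simp
    then have "card K - card (insert y J) < card K - card J" using False by simp
    from less.hyps[OF this y(2)] show ?thesis using y by blast
  qed
qed

lemma matroid_extend_by_subset:
  assumes m: "matroid E indep" and K: "indep K" and C: "indep C"
  obtains Y where "Y \<subseteq> K - C" "indep (C \<union> Y)" "card K - card C \<le> card Y"
proof -
  obtain I where I: "C \<subseteq> I" "I \<subseteq> C \<union> K" "indep I" "card K \<le> card I"
    using matroid_extend_from[OF m K C] by blast
  have "finite I" using matroid_indep_finite[OF m I(3)] .
  then have "card I \<le> card C + card (I - C)"
    by (metis Diff_partition I(1) card_Un_le finite_subset)
  show thesis
  proof (rule that)
    show "I - C \<subseteq> K - C" using I(2) by blast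
    show "indep (C \<union> (I - C))" using I(1,3) by (simp add: Un_absorb1)
    show "card K - card C \<le> card (I - C)" using I(4) \<open>card I \<le> _\<close> by linarith
  qed
qed

lemma basis_card_ge_rank:
  assumes m: "matroid E indep" and bB: "basis E indep B"
  shows "matroid_rank E indep \<le> card B"
proof (rule ccontr)
  assume less: "\<not> matroid_rank E indep \<le> card B"
  let ?A = "card ` {X. X \<subseteq> E \<and> indep X}"
  have "finite E" using m unfolding matroid_def by blast
  then have "finite ?A" by simp
  moreover have "indep {}" using m unfolding matroid_def by blast
  then have "?A \<noteq> {}" by blast
  ultimately have "matroid_rank E indep \<in> ?A"
    unfolding matroid_rank_def by (rule Max_in)
  then obtain X where X: "X \<subseteq> E" "indep X" "card X = matroid_rank E indep" by auto
  have "indep B" using bB unfolding basis_def by blast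
  from matroid_augment[OF m this X(2)] obtain y where "y \<in> X - B" "indep (insert y B)"
    using less X(3) by auto
  then show False using bB X(1) unfolding basis_def by blast
qed

text \<open>If \<open>|X| < |Y|\<close> for the set \<open>X\<close> of exchangeable elements, augment \<open>X\<close> by some
  \<open>y \<in> Y\<close> and extend \<open>X + y\<close> inside \<open>S + y\<close> to size \<open>|S|\<close>. Since \<open>S + y\<close> is dependent,
  the result is \<open>S - x + y\<close> for some \<open>x \<notin> X\<close>, which makes \<open>x\<close> exchangeable after all.\<close>

lemma card_le_exchangeable:
  assumes m: "matroid E indep" and S: "indep S" and Y: "indep Y"
    and Y_dep: "\<And>y. y \<in> Y \<Longrightarrow> y \<notin> S \<and> \<not> indep (insert y S)"
  shows "card Y \<le> card {x \<in> S. \<exists>y \<in> Y. indep (insert y (S - {x}))}"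
    (is "_ \<le> card ?X")
proof (rule ccontr)
  assume "\<not> card Y \<le> card ?X"
  moreover have XS: "?X \<subseteq> S" by blast
  ultimately obtain y where y: "y \<in> Y" "y \<notin> ?X" "indep (insert y ?X)"
    using matroid_augment[OF m matroid_indep_subset[OF m S XS] Y] by auto
  obtain J where J: "insert y ?X \<subseteq> J" "J \<subseteq> insert y ?X \<union> S" "indep J" "card S \<le> card J"
    using matroid_extend_from[OF m S y(3)] by blast
  have "\<not> indep (insert y S)" using Y_dep[OF y(1)] ..
  then have "\<not> S \<subseteq> J" using matroid_indep_subset[OF m J(3), of "insert y S"] J(1) by blast
  then obtain x where x: "x \<in> S" "x \<notin> J" by blast
  have "finite S" using matroid_indep_finite[OF m S] .
  moreover have "J \<subseteq> insert y (S - {x})" using J(2) XS x by blast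
  moreover have "card (insert y (S - {x})) = card S"
    using \<open>finite S\<close> x(1) Y_dep[OF y(1)] by (metis DiffD1 card_Suc_Diff1 card_insert_disjoint finite_Diff)
  ultimately have "J = insert y (S - {x})"
    using card_seteq J(4) by (metis finite_insert finite_Diff)
  then have "x \<in> ?X" using x(1) J(3) y(1) by blast
  then show False using x(2) J(1) by blast
qed

lemma valid_partial_table_row_indep:
  "valid_partial_table indep f n B T \<Longrightarrow> i \<in> {1..f} \<Longrightarrow> indep (row_set n T i)"
  unfolding valid_partial_table_def by blast

lemma valid_partial_table_col_indep:
  "valid_partial_table indep f n B T \<Longrightarrow> j \<in> {1..n} \<Longrightarrow> indep (col_set f T j)"
  unfolding valid_partial_table_def by blast

lemma empty_position_basis_disjoint_row:
  assumes "valid_partial_table indep f n B T"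
    and "\<forall>i \<in> {1..f}. \<forall>j \<in> {1..n}. \<forall>i' \<in> {1..f}. \<forall>j' \<in> {1..n}.
           (i, j) \<noteq> (i', j') \<longrightarrow> B i j \<inter> B i' j' = {}"
    and "i \<in> {1..f}" "b \<in> {1..n}" "T i b = None"
  shows "B i b \<inter> row_set n T i = {}"
proof -
  have "y \<notin> B i b" if "j \<in> {1..n}" "T i j = Some y" for j y
  proof -
    have "y \<in> B i j" using assms(1,3) that unfolding valid_partial_table_def by blast
    moreover have "j \<noteq> b" using that assms(5) by auto
    ultimately show ?thesis using assms(2-4) that(1) by blast
  qed
  then show ?thesis unfolding row_set_def by blast
qed

lemma exchangeable_in_swappable_columns:
  assumes "y \<in> B i b" "plus_indep indep (col_set f T b) y" "y \<notin> row_set n T i"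
    and "x \<in> row_set n T i" "indep (insert y (row_set n T i - {x}))"
  shows "x \<in> (\<lambda>c. the (T i c)) ` {c. swappable indep f n B T i b c}"
proof -
  obtain c where c: "c \<in> {1..n}" "T i c = Some x" using assms(4) unfolding row_set_def by blast
  have "swap_witness indep f n B T i b c y"
    unfolding swap_witness_def using assms c(2) by (auto simp: plus_indep_def)
  then have "swappable indep f n B T i b c" unfolding swappable_def using c by blast
  then show ?thesis using c(2) by force
qed

lemma card_exchangeable_le_card_swappable:
  assumes "Y \<subseteq> B i b" and "\<And>y. y \<in> Y \<Longrightarrow> plus_indep indep (col_set f T b) y"
    and "\<And>y. y \<in> Y \<Longrightarrow> y \<notin> row_set n T i"
  shows "card {x \<in> row_set n T i. \<exists>y \<in> Y. indep (insert y (row_set n T i - {x}))}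
           \<le> card {c. swappable indep f n B T i b c}"
proof -
  let ?Sw = "{c. swappable indep f n B T i b c}"
  have finite_Sw: "finite ?Sw"
    by (rule finite_subset[of _ "{1..n}"]) (auto simp: swappable_def)
  have "card {x \<in> row_set n T i. \<exists>y \<in> Y. indep (insert y (row_set n T i - {x}))}
          \<le> card ((\<lambda>c. the (T i c)) ` ?Sw)"
  proof (intro card_mono finite_imageI finite_Sw subsetI)
    fix x assume "x \<in> {x \<in> row_set n T i. \<exists>y \<in> Y. indep (insert y (row_set n T i - {x}))}"
    then obtain y where "x \<in> row_set n T i" "y \<in> Y" "indep (insert y (row_set n T i - {x}))"
      by blast
    then show "x \<in> (\<lambda>c. the (T i c)) ` ?Sw"
      using assms by (intro exchangeable_in_swappable_columns) auto
  qed
  also have "\<dots> \<le> card ?Sw" using finite_Sw by (rule card_image_le)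
  finally show ?thesis .
qed

theorem mainTheorem3:
  fixes E :: "'a set" and indep :: "'a set \<Rightarrow> bool"
    and f n :: nat and B :: "nat \<Rightarrow> nat \<Rightarrow> 'a set" and T :: "nat \<Rightarrow> nat \<Rightarrow> 'a option"
    and i b :: nat
  assumes "matroid E indep"
    and "matroid_rank E indep = n"
    and "0 < f" and "f \<le> n"
    and "\<forall>i \<in> {1..f}. \<forall>j \<in> {1..n}. basis E indep (B i j)"
    and "\<forall>i \<in> {1..f}. \<forall>j \<in> {1..n}. \<forall>i' \<in> {1..f}. \<forall>j' \<in> {1..n}.
           (i, j) \<noteq> (i', j') \<longrightarrow> B i j \<inter> B i' j' = {}"
    and "valid_partial_table indep f n B T"
    and "i \<in> {1..f}" and "b \<in> {1..n}"
    and "T i b = None"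
  shows "(\<exists>x \<in> B i b. plus_indep indep (row_set n T i) x \<and> plus_indep indep (col_set f T b) x)
         \<or> n - card (col_set f T b) \<le> card {c. swappable indep f n B T i b c}"
proof (cases "\<exists>x \<in> B i b. plus_indep indep (row_set n T i) x \<and> plus_indep indep (col_set f T b) x")
  case no_common: False
  let ?S = "row_set n T i" and ?C = "col_set f T b" and ?Sw = "{c. swappable indep f n B T i b c}"
  have S: "indep ?S" and C: "indep ?C"
    using assms(7-9) valid_partial_table_row_indep valid_partial_table_col_indep by blast+
  have basis: "basis E indep (B i b)" using assms(5,8,9) by blast
  then obtain Y where Y: "Y \<subseteq> B i b - ?C" "indep (?C \<union> Y)" "card (B i b) - card ?C \<le> card Y"
    using matroid_extend_by_subset[OF assms(1) _ C] unfolding basis_def by blast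
  have Y_indep: "indep Y" using matroid_indep_subset[OF assms(1) Y(2)] by blast
  have Y_col: "plus_indep indep ?C y" if "y \<in> Y" for y
    using that Y matroid_indep_subset[OF assms(1) Y(2), of "insert y ?C"]
    unfolding plus_indep_def by blast
  have Y_row: "y \<notin> ?S" if "y \<in> Y" for y
    using that Y(1) empty_position_basis_disjoint_row[OF assms(7,6,8-10)] by blast
  have Y_dep: "y \<notin> ?S \<and> \<not> indep (insert y ?S)" if "y \<in> Y" for y
    using no_common Y(1) that Y_row[OF that] Y_col[OF that] unfolding plus_indep_def by blast
  have "n - card ?C \<le> card Y"
    using Y(3) basis_card_ge_rank[OF assms(1) basis] assms(2) by linarith
  also have "\<dots> \<le> card {x \<in> ?S. \<exists>y \<in> Y. indep (insert y (?S - {x}))}"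
    using card_le_exchangeable[OF assms(1) S Y_indep Y_dep] .
  also have "\<dots> \<le> card ?Sw"
    using card_exchangeable_le_card_swappable[OF _ Y_col Y_row] Y(1) by blast
  finally show ?thesis by (rule disjI2)
qed (rule disjI1)

end
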